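(* In the setting below with $P=\mathfrak A$ and the absolute error criterion, assume $\lambda\in\ell_{\tau_0}$ for some $\tau_0\in(0,\infty)$. Then: (i) if $\lambda_1<1$, $\{S_d\}$ is strongly polynomially tractable, independently of the choice of the sets $I_d$; (ii) if $\lambda_1\ge1$ and there exist $\tau\ge\tau_0$ and $d_0\in\mathbb N$ such that $$\frac{\ln(a_d!)}{d}\ge\ln\big(\|\lambda\|_{\ell_\tau}^\tau\big)\quad\text{for all }d\ge d_0,$$ then $\{S_d\}$ is strongly polynomially tractable.
   Context: Setting: $S_1:H_1\to G_1$ is a compact linear operator between real Hilbert spaces ($H_1$ infinite-dimensional separable); $\lambda=(\lambda_m)_{m\in\mathbb N}$, $\lambda_1\ge\lambda_2\ge\dots\ge0$, are the eigenvalues of $S_1^\dagger S_1$. $S_d=S_1^{\otimes d}:H_1^{\otimes d}\to G_1^{\otimes d}$. For each $d$ fix $\emptyset\ne I_d=\{i_1<\dots<i_{a_d}\}\subset\{1,\dots,d\}$ ($I_1=\{1\}$), put $a_d=\#I_d$, $b_d=d-a_d$, and fix one type $P\in\{\mathfrak S,\mathfrak A\}$ for all $d$; the problem $\{S_d\}$ is the family of restrictions of $S_d$ to the $I_d$-symmetric subspace (if $P=\mathfrak S$) or $I_d$-antisymmetric subspace (if $P=\mathfrak A$) of $H_1^{\otimes d}$, i.e. the range of $\frac1{a_d!}\sum_{\pi}(\pm1)U_\pi$, the sum over permutations $\pi$ of $\{1,\dots,d\}$ fixing all points outside $I_d$, $U_\pi(f_1\otimes\cdots\otimes f_d)=f_{\pi(1)}\otimes\cdots\otimes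 f_{\pi(d)}$, sign $(-1)^{|\pi|}$ used for $\mathfrak A$. Let $\nabla_d=\{k\in\mathbb N^d:k_{i_1}\le\dots\le k_{i_{a_d}}\}$ for $P=\mathfrak S$ and with strict inequalities for $P=\mathfrak A$; $\lambda_{d,k}=\prod_{l=1}^d\lambda_{k_l}$; $\psi:\mathbb N\to\nabla_d$ a bijection with $\lambda_{d,\psi(1)}\ge\lambda_{d,\psi(2)}\ge\cdots$. These are exactly the eigenvalues of $S_d^\dagger S_d$ on the subspace, and the information complexity (absolute error) is $n(\epsilon,d)=\#\{k\in\nabla_d:\lambda_{d,k}>\epsilon^2\}$, the initial error $\epsilon^{\rm init}_d=\sqrt{\lambda_{d,\psi(1)}}$ (equal to $\lambda_1^{d/2}$ if $P=\mathfrak S$, and $\sqrt{\lambda_1^{b_d}\lambda_1\lambda_2\cdots\lambda_{a_d}}$ if $P=\mathfrak A$). Polynomially tractable: $\exists C,p>0,q\ge0$ with $n(\epsilon,d)\le C\epsilon^{-p}d^q$ for all $d\in\mathbb N,\epsilon\in(0,1]$; strongly polynomially tractable: this with $q=0$. Standing assumptions: $\lambda_2>0$ and $\epsilon_d^{\rm init}>0$ for all $d$. $\ell_\tau$: sequences with $\|\lambda\|_{\ell_\tau}^\tau=\sum_m\lambda_m^\tau<\infty$. *)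

theory Defs
  imports "HOL-Analysis.Analysis"
begin

text \<open>Eigenvalue sequence: lam m for m = 1, 2, ... (the value lam 0 is unused).  A multi-index k \<in> \<nabla>_d is a function
  nat \<Rightarrow> nat, positive on {1..d} and 0 outside (to make it a canonical representative).\<close>

definition admissible_eigs :: "(nat \<Rightarrow> real) \<Rightarrow> bool" where
  "admissible_eigs lam \<longleftrightarrow> (\<forall>m\<ge>1. lam m \<ge> 0) \<and> (\<forall>m\<ge>1. lam (Suc m) \<le> lam m)"

definition admissible_index_sets :: "(nat \<Rightarrow> nat set) \<Rightarrow> bool" where
  "admissible_index_sets I \<longleftrightarrow> I 1 = {1} \<and> (\<forall>d\<ge>1. I d \<noteq> {} \<and> I d \<subseteq> {1..d})"

definition nabla_anti :: "(nat \<Rightarrow> nat set) \<Rightarrow> nat \<Rightarrow> (nat \<Rightarrow> nat) set" where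
  "nabla_anti I d = {k. (\<forall>l\<in>{1..d}. 1 \<le> k l) \<and> (\<forall>l. l \<notin> {1..d} \<longrightarrow> k l = 0)
       \<and> (\<forall>i\<in>I d. \<forall>j\<in>I d. i < j \<longrightarrow> k i < k j)}"

definition lam_d :: "(nat \<Rightarrow> real) \<Rightarrow> nat \<Rightarrow> (nat \<Rightarrow> nat) \<Rightarrow> real" where
  "lam_d lam d k = (\<Prod>l\<in>{1..d}. lam (k l))"

text \<open>The set whose cardinality is the information complexity n(\<epsilon>,d) (absolute error).\<close>
definition info_set_anti :: "(nat \<Rightarrow> real) \<Rightarrow> (nat \<Rightarrow> nat set) \<Rightarrow> real \<Rightarrow> nat \<Rightarrow> (nat \<Rightarrow> nat) set" where
  "info_set_anti lam I \<epsilon> d = {k \<in> nabla_anti I d. lam_d lam d k > \<epsilon>\<^sup>2}"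

definition info_compl_anti :: "(nat \<Rightarrow> real) \<Rightarrow> (nat \<Rightarrow> nat set) \<Rightarrow> real \<Rightarrow> nat \<Rightarrow> nat" where
  "info_compl_anti lam I \<epsilon> d = card (info_set_anti lam I \<epsilon> d)"

text \<open>Strong polynomial tractability (finiteness made explicit since card of an infinite set is 0).\<close>
definition strongly_poly_tractable_anti :: "(nat \<Rightarrow> real) \<Rightarrow> (nat \<Rightarrow> nat set) \<Rightarrow> bool" where
  "strongly_poly_tractable_anti lam I \<longleftrightarrow>
     (\<exists>C p. C > 0 \<and> p > 0 \<and> (\<forall>d\<ge>1. \<forall>\<epsilon>. 0 < \<epsilon> \<and> \<epsilon> \<le> 1 \<longrightarrow>
        finite (info_set_anti lam I \<epsilon> d) \<and> real (info_compl_anti lam I \<epsilon> d) \<le> C * \<epsilon> powr (-p)))"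

definition in_ell :: "real \<Rightarrow> (nat \<Rightarrow> real) \<Rightarrow> bool" where
  "in_ell \<tau> lam \<longleftrightarrow> summable (\<lambda>m. lam (Suc m) powr \<tau>)"

definition ell_norm_pow :: "real \<Rightarrow> (nat \<Rightarrow> real) \<Rightarrow> real" where
  "ell_norm_pow \<tau> lam = (\<Sum>m. lam (Suc m) powr \<tau>)"

definition init_err_sq_anti :: "(nat \<Rightarrow> real) \<Rightarrow> (nat \<Rightarrow> nat set) \<Rightarrow> nat \<Rightarrow> real" where
  "init_err_sq_anti lam I d = lam 1 ^ (d - card (I d)) * (\<Prod>m\<in>{1..card (I d)}. lam m)"

end

theory Submission
  imports Defs "HOL-Combinatorics.Permutations"
begin

(* Write a = card (I d) and mu m = lam m powr tau.  A multi-index k in nabla_d is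
   strictly increasing on I d, so the a! multi-indices k o pi (pi a permutation of I d) are
   pairwise distinct and all have the same eigenvalue lam_d k.  Hence, for every finite
   F \<subseteq> nabla_d,  a! * (sum over k in F of prod_l mu (k l)) \<le> (sum_m mu m)^d,  the right-hand
   side being the sum over ALL multi-indices.  A Markov/Chebyshev argument turns this into
   n(eps,d) \<le> ||lam||_tau^(tau d) / a! * eps^(-2 tau); so {S_d} is strongly polynomially
   tractable as soon as ||lam||_tau^(tau d) \<le> C * a! for all d (lemma
   strongly_poly_tractable_anti_if_power_bound).  This bound is then verified in the two
   cases of the theorem: if lam 1 < 1, raising tau makes ||lam||_tau^tau \<le> 1; if lam 1 \<ge> 1,
   the hypothesis ln(a!)/d \<ge> ln ||lam||_tau^tau gives it with C = ||lam||_tau^(tau d_0). *)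

(* A permutation of a well-ordered set that is strictly monotone on it is the identity;
   this makes the permuted copies of a strictly increasing multi-index distinct. *)
lemma strict_mono_permutation_is_id:
  fixes \<rho> :: "'a::wellorder \<Rightarrow> 'a"
  assumes perm: "\<rho> permutes A" and mono: "strict_mono_on A \<rho>"
  shows "\<rho> = id"
proof -
  have "i \<le> \<rho> i" if "i \<in> A" for i
    using that
  proof (induction i rule: less_induct)
    case (less i)
    show ?case
    proof (rule ccontr)
      assume "\<not> i \<le> \<rho> i"
      hence lt: "\<rho> i < i" by simp
      have \<rho>i: "\<rho> i \<in> A" using permutes_in_image[OF perm] less.prems by simp
      have "\<rho> i \<le> \<rho> (\<rho> i)" using less.IH[OF lt \<rho>i] .
      moreover have "\<rho> (\<rho> i) < \<rho> i" using strict_mono_onD[OF mono \<rho>i less.prems lt] .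
      ultimately show False by simp
    qed
  qed
  thus ?thesis using permutes_natset_ge[OF perm] by blast
qed

lemma inj_on_compose_permutations:
  fixes F :: "('a::wellorder \<Rightarrow> 'b::linorder) set"
  assumes mono: "\<And>k. k \<in> F \<Longrightarrow> strict_mono_on A k"
  shows "inj_on (\<lambda>(\<pi>, k). k \<circ> \<pi>) ({\<pi>. \<pi> permutes A} \<times> F)"
proof (rule inj_onI, clarsimp)
  fix \<pi> k \<sigma> k'
  assume \<pi>: "\<pi> permutes A" and k: "k \<in> F" and \<sigma>: "\<sigma> permutes A" and k': "k' \<in> F"
    and eq: "k \<circ> \<pi> = k' \<circ> \<sigma>"
  define \<rho> where "\<rho> = \<sigma> \<circ> inv \<pi>"
  have \<rho>_perm: "\<rho> permutes A"
    unfolding \<rho>_def by (rule permutes_compose[OF permutes_inv[OF \<pi>] \<sigma>])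
  have k_eq: "k x = k' (\<rho> x)" for x
    using fun_cong[OF eq, of "inv \<pi> x"] permutes_inverses(1)[OF \<pi>] by (simp add: \<rho>_def)
  have "strict_mono_on A \<rho>"
  proof (rule strict_mono_onI)
    fix i j assume ij: "i \<in> A" "j \<in> A" "i < j"
    have "k' (\<rho> i) < k' (\<rho> j)" using strict_mono_onD[OF mono[OF k] ij] k_eq by simp
    moreover have "\<rho> i \<in> A" "\<rho> j \<in> A" using permutes_in_image[OF \<rho>_perm] ij by auto
    ultimately show "\<rho> i < \<rho> j" using strict_mono_on_less[OF mono[OF k']] by blast
  qed
  hence \<rho>_id: "\<rho> = id" using strict_mono_permutation_is_id[OF \<rho>_perm] by blast
  have "\<sigma> = \<rho> \<circ> \<pi>"
    unfolding \<rho>_def using permutes_inverses(2)[OF \<pi>] by (simp add: fun_eq_iff)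
  thus "\<pi> = \<sigma> \<and> k = k'" using \<rho>_id k_eq by (simp add: fun_eq_iff)
qed

lemma permuted_multi_index:
  assumes Isub: "I d \<subseteq> {1..d}" and k: "k \<in> nabla_anti I d" and \<pi>: "\<pi> permutes I d"
  shows "\<forall>l\<in>{1..d}. 1 \<le> (k \<circ> \<pi>) l" and "\<forall>l. l \<notin> {1..d} \<longrightarrow> (k \<circ> \<pi>) l = 0"
    and "lam_d \<mu> d (k \<circ> \<pi>) = lam_d \<mu> d k"
proof -
  have \<pi>d: "\<pi> permutes {1..d}" using permutes_subset[OF \<pi> Isub] .
  show "\<forall>l\<in>{1..d}. 1 \<le> (k \<circ> \<pi>) l"
    using k permutes_in_image[OF \<pi>d] unfolding nabla_anti_def by auto
  show "\<forall>l. l \<notin> {1..d} \<longrightarrow> (k \<circ> \<pi>) l = 0"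
    using k permutes_not_in[OF \<pi>d] unfolding nabla_anti_def by auto
  show "lam_d \<mu> d (k \<circ> \<pi>) = lam_d \<mu> d k"
    unfolding lam_d_def using prod.permute[OF \<pi>d, of "\<lambda>l. \<mu> (k l)"] by (simp add: o_def)
qed

lemma sum_lam_d_le_power:
  fixes \<mu> :: "nat \<Rightarrow> real" and G :: "(nat \<Rightarrow> nat) set"
  assumes G: "finite G"
    and pos: "\<And>k l. k \<in> G \<Longrightarrow> l \<in> {1..d} \<Longrightarrow> 1 \<le> k l"
    and supp: "\<And>k l. k \<in> G \<Longrightarrow> l \<notin> {1..d} \<Longrightarrow> k l = 0"
    and nn: "\<And>m. 0 \<le> \<mu> m" and sm: "summable (\<lambda>m. \<mu> (Suc m))"
  shows "(\<Sum>k\<in>G. lam_d \<mu> d k) \<le> (\<Sum>m. \<mu> (Suc m)) ^ d"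
proof -
  have "finite ((\<lambda>(k, l). k l) ` (G \<times> {1..d}))" using G by simp
  then obtain N where "\<forall>n\<in>(\<lambda>(k, l). k l) ` (G \<times> {1..d}). n \<le> N"
    unfolding finite_nat_set_iff_bounded_le by blast
  hence N: "\<And>k l. k \<in> G \<Longrightarrow> l \<in> {1..d} \<Longrightarrow> k l \<le> N" by force
  define R where "R k = restrict k {1..d}" for k :: "nat \<Rightarrow> nat"
  define Box where "Box = PiE {1..d} (\<lambda>_. {1..N})"
  have inj: "inj_on R G"
  proof (rule inj_onI)
    fix k k' assume "k \<in> G" "k' \<in> G" "R k = R k'"
    thus "k = k'" using supp unfolding R_def by (metis ext restrict_apply')
  qed
  have image_in_box: "R ` G \<subseteq> Box" using pos N unfolding R_def Box_def by auto
  have lam_d_nn: "0 \<le> lam_d \<mu> d f" for f unfolding lam_d_def by (simp add: nn prod_nonneg)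
  have partial_sum: "(\<Sum>m\<in>{1..N}. \<mu> m) \<le> (\<Sum>m. \<mu> (Suc m))"
  proof -
    have "(\<Sum>m\<in>{1..N}. \<mu> m) = (\<Sum>m<N. \<mu> (Suc m))"
      using sum.atLeast1_atMost_eq[of \<mu> N] by simp
    also have "\<dots> \<le> (\<Sum>m. \<mu> (Suc m))" by (rule sum_le_suminf[OF sm]) (auto simp: nn)
    finally show ?thesis .
  qed
  have "(\<Sum>k\<in>G. lam_d \<mu> d k) = (\<Sum>k\<in>G. lam_d \<mu> d (R k))"
    unfolding R_def lam_d_def by (intro sum.cong prod.cong) auto
  also have "\<dots> = (\<Sum>f\<in>R ` G. lam_d \<mu> d f)"
    using sum.reindex[OF inj, of "lam_d \<mu> d"] by (simp add: o_def)
  also have "\<dots> \<le> (\<Sum>f\<in>Box. lam_d \<mu> d f)"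
    by (rule sum_mono2[OF _ image_in_box]) (auto simp: Box_def finite_PiE lam_d_nn)
  also have "\<dots> = (\<Prod>l\<in>{1..d}. \<Sum>m\<in>{1..N}. \<mu> m)"
    unfolding Box_def lam_d_def by (rule prod_sum_PiE[symmetric]) auto
  also have "\<dots> \<le> (\<Sum>m. \<mu> (Suc m)) ^ d"
    using partial_sum by (simp add: power_mono sum_nonneg nn)
  finally show ?thesis .
qed

(* The key counting estimate: each multi-index of nabla_d stands for a! distinct multi-indices
   with the same eigenvalue, so a! times the sum over nabla_d is bounded by the full series. *)
lemma fact_times_sum_nabla_le_power:
  fixes \<mu> :: "nat \<Rightarrow> real"
  assumes Isub: "I d \<subseteq> {1..d}" and F: "finite F" "F \<subseteq> nabla_anti I d"
    and nn: "\<And>m. 0 \<le> \<mu> m" and sm: "summable (\<lambda>m. \<mu> (Suc m))"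
  shows "fact (card (I d)) * (\<Sum>k\<in>F. lam_d \<mu> d k) \<le> (\<Sum>m. \<mu> (Suc m)) ^ d"
proof -
  define P where "P = {\<pi>. \<pi> permutes I d}"
  define \<Phi> :: "(nat \<Rightarrow> nat) \<times> (nat \<Rightarrow> nat) \<Rightarrow> nat \<Rightarrow> nat" where "\<Phi> = (\<lambda>(\<pi>, k). k \<circ> \<pi>)"
  have finI: "finite (I d)" using Isub finite_subset by blast
  have P: "finite P" "card P = fact (card (I d))"
    using finite_permutations[OF finI] card_permutations[OF refl finI] by (simp_all add: P_def)
  have "strict_mono_on (I d) k" if "k \<in> F" for k :: "nat \<Rightarrow> nat"
    using that F(2) unfolding nabla_anti_def strict_mono_on_def by blast
  hence inj: "inj_on \<Phi> (P \<times> F)"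
    unfolding \<Phi>_def P_def by (rule inj_on_compose_permutations)
  note permuted = permuted_multi_index[OF Isub subsetD[OF F(2)]]
  have "fact (card (I d)) * (\<Sum>k\<in>F. lam_d \<mu> d k) = (\<Sum>\<pi>\<in>P. \<Sum>k\<in>F. lam_d \<mu> d k)"
    using P(2) by simp
  also have "\<dots> = (\<Sum>\<pi>\<in>P. \<Sum>k\<in>F. lam_d \<mu> d (k \<circ> \<pi>))"
    using permuted(3) unfolding P_def by (intro sum.cong refl) auto
  also have "\<dots> = (\<Sum>x\<in>P \<times> F. lam_d \<mu> d (\<Phi> x))"
    unfolding \<Phi>_def sum.cartesian_product by (simp add: case_prod_unfold)
  also have "\<dots> = (\<Sum>f\<in>\<Phi> ` (P \<times> F). lam_d \<mu> d f)"
    using sum.reindex[OF inj, of "lam_d \<mu> d"] by (simp add: o_def)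
  also have "\<dots> \<le> (\<Sum>m. \<mu> (Suc m)) ^ d"
  proof (rule sum_lam_d_le_power[OF _ _ _ nn sm])
    show "finite (\<Phi> ` (P \<times> F))" using P(1) F(1) by simp
  qed (use permuted(1,2) in \<open>auto simp: \<Phi>_def P_def\<close>)
  finally show ?thesis .
qed

(* Markov's inequality for the information complexity: every counted multi-index has
   lam_d > eps^2, i.e. lam_d powr tau > eps^(2 tau). *)
lemma card_info_subset_bound:
  assumes Isub: "I d \<subseteq> {1..d}" and tau: "\<tau> > 0" and eps: "\<epsilon> > 0"
    and sm: "summable (\<lambda>m. lam (Suc m) powr \<tau>)"
    and F: "finite F" "F \<subseteq> info_set_anti lam I \<epsilon> d"
  shows "fact (card (I d)) * (real (card F) * \<epsilon> powr (2 * \<tau>)) \<le> ell_norm_pow \<tau> lam ^ d"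
proof -
  define \<mu> where "\<mu> m = lam m powr \<tau>" for m
  have large: "\<epsilon> powr (2 * \<tau>) \<le> lam_d \<mu> d k" if "k \<in> F" for k
  proof -
    have "\<epsilon>\<^sup>2 < lam_d lam d k" using that F(2) unfolding info_set_anti_def by auto
    hence "(\<epsilon>\<^sup>2) powr \<tau> \<le> lam_d lam d k powr \<tau>" using tau by (intro powr_mono2) auto
    moreover have "(\<epsilon>\<^sup>2) powr \<tau> = \<epsilon> powr (2 * \<tau>)"
      using eps by (simp add: powr_powr[symmetric])
    ultimately show ?thesis unfolding lam_d_def \<mu>_def by (simp add: prod_powr_distrib)
  qed
  have "real (card F) * \<epsilon> powr (2 * \<tau>) \<le> (\<Sum>k\<in>F. lam_d \<mu> d k)"
    using sum_mono[of F "\<lambda>_. \<epsilon> powr (2 * \<tau>)", OF large] by simp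
  hence "fact (card (I d)) * (real (card F) * \<epsilon> powr (2 * \<tau>))
         \<le> fact (card (I d)) * (\<Sum>k\<in>F. lam_d \<mu> d k)" by simp
  also have "\<dots> \<le> (\<Sum>m. \<mu> (Suc m)) ^ d"
    using F sm Isub unfolding info_set_anti_def \<mu>_def
    by (intro fact_times_sum_nabla_le_power) auto
  finally show ?thesis unfolding \<mu>_def ell_norm_pow_def .
qed

lemma strongly_poly_tractable_anti_if_power_bound:
  assumes Isub: "\<forall>d\<ge>1. I d \<subseteq> {1..d}" and tau: "\<tau> > 0"
    and sm: "summable (\<lambda>m. lam (Suc m) powr \<tau>)" and C: "C > 0"
    and bound: "\<forall>d\<ge>1. ell_norm_pow \<tau> lam ^ d \<le> C * fact (card (I d))"
  shows "strongly_poly_tractable_anti lam I"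
proof -
  have "finite (info_set_anti lam I \<epsilon> d) \<and> real (info_compl_anti lam I \<epsilon> d) \<le> C * \<epsilon> powr (-(2 * \<tau>))"
    if d: "d \<ge> 1" and eps: "\<epsilon> > 0" for d \<epsilon>
  proof -
    define B where "B = C * \<epsilon> powr (-(2 * \<tau>))"
    have B: "B \<ge> 0" using C by (simp add: B_def)
    have "real (card F) \<le> B" if F: "finite F" "F \<subseteq> info_set_anti lam I \<epsilon> d" for F
    proof -
      have "fact (card (I d)) * (real (card F) * \<epsilon> powr (2 * \<tau>)) \<le> ell_norm_pow \<tau> lam ^ d"
        by (rule card_info_subset_bound[OF _ tau eps sm F]) (use Isub d in blast)
      also have "\<dots> \<le> fact (card (I d)) * C" using bound d by (simp add: mult.commute)
      finally have "real (card F) * \<epsilon> powr (2 * \<tau>) \<le> C"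
        by (simp only: mult_le_cancel_left_pos[OF fact_gt_zero])
      thus ?thesis using eps by (simp add: B_def powr_minus field_simps)
    qed
    hence "finite (info_set_anti lam I \<epsilon> d) \<and> card (info_set_anti lam I \<epsilon> d) \<le> nat \<lfloor>B\<rfloor>"
      by (intro finite_if_finite_subsets_card_bdd le_nat_floor)
    thus ?thesis unfolding info_compl_anti_def B_def[symmetric]
      using of_nat_floor[OF B] by (meson of_nat_le_iff order_trans)
  qed
  thus ?thesis unfolding strongly_poly_tractable_anti_def using C tau
    by (intro exI[of _ C] exI[of _ "2 * \<tau>"]) auto
qed

lemma admissible_eigs_bounds:
  assumes eigs: "admissible_eigs lam"
  shows "0 \<le> lam (Suc m) \<and> lam (Suc m) \<le> lam 1"
proof (induction m)
  case 0
  show ?case using eigs unfolding admissible_eigs_def by auto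
next
  case (Suc m)
  have "0 \<le> lam (Suc (Suc m))" "lam (Suc (Suc m)) \<le> lam (Suc m)"
    using eigs unfolding admissible_eigs_def by auto
  thus ?case using Suc by simp
qed

(* Raising the exponent keeps lam in l_tau and costs at most the factor lam_1^(tau - tau_0),
   because lam_m^tau = lam_m^(tau - tau_0) * lam_m^tau_0 \<le> lam_1^(tau - tau_0) * lam_m^tau_0. *)
lemma ell_norm_pow_larger_exponent:
  assumes eigs: "admissible_eigs lam" and tau: "\<tau>\<^sub>0 \<le> \<tau>" and ell: "in_ell \<tau>\<^sub>0 lam"
  shows "in_ell \<tau> lam" and "ell_norm_pow \<tau> lam \<le> lam 1 powr (\<tau> - \<tau>\<^sub>0) * ell_norm_pow \<tau>\<^sub>0 lam"
proof -
  have term_le: "lam (Suc m) powr \<tau> \<le> lam 1 powr (\<tau> - \<tau>\<^sub>0) * lam (Suc m) powr \<tau>\<^sub>0" for m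
  proof -
    have "lam (Suc m) powr \<tau> = lam (Suc m) powr (\<tau> - \<tau>\<^sub>0) * lam (Suc m) powr \<tau>\<^sub>0"
      by (simp add: powr_add[symmetric])
    also have "\<dots> \<le> lam 1 powr (\<tau> - \<tau>\<^sub>0) * lam (Suc m) powr \<tau>\<^sub>0"
      using admissible_eigs_bounds[OF eigs, of m] tau by (intro mult_right_mono powr_mono2) auto
    finally show ?thesis .
  qed
  have dominating: "summable (\<lambda>m. lam 1 powr (\<tau> - \<tau>\<^sub>0) * lam (Suc m) powr \<tau>\<^sub>0)"
    using ell unfolding in_ell_def by (rule summable_mult)
  show sm: "in_ell \<tau> lam"
    unfolding in_ell_def by (rule summable_comparison_test[OF _ dominating]) (use term_le in auto)
  have "ell_norm_pow \<tau> lam \<le> (\<Sum>m. lam 1 powr (\<tau> - \<tau>\<^sub>0) * lam (Suc m) powr \<tau>\<^sub>0)"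
    unfolding ell_norm_pow_def using sm unfolding in_ell_def
    by (rule suminf_le[OF term_le _ dominating])
  also have "\<dots> = lam 1 powr (\<tau> - \<tau>\<^sub>0) * ell_norm_pow \<tau>\<^sub>0 lam"
    unfolding ell_norm_pow_def using ell unfolding in_ell_def by (rule suminf_mult)
  finally show "ell_norm_pow \<tau> lam \<le> lam 1 powr (\<tau> - \<tau>\<^sub>0) * ell_norm_pow \<tau>\<^sub>0 lam" .
qed

lemma first_term_le_ell_norm_pow:
  assumes "in_ell \<tau> lam"
  shows "lam 1 powr \<tau> \<le> ell_norm_pow \<tau> lam"
  using sum_le_suminf[of "\<lambda>m. lam (Suc m) powr \<tau>" "{..<1}"] assms
  unfolding in_ell_def ell_norm_pow_def by simp

(* Case lam_1 < 1: a large enough exponent tau makes ||lam||_tau^tau \<le> 1, namely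
   tau = tau_0 + ln ||lam||_tau_0^tau_0 / (-ln lam_1) when the latter norm exceeds 1. *)
lemma ell_norm_pow_le_1_if_lam1_lt_1:
  assumes eigs: "admissible_eigs lam" and lam1: "0 < lam 1" "lam 1 < 1"
    and ell: "in_ell \<tau>\<^sub>0 lam"
  shows "\<exists>\<tau>\<ge>\<tau>\<^sub>0. in_ell \<tau> lam \<and> ell_norm_pow \<tau> lam \<le> 1"
proof (cases "ell_norm_pow \<tau>\<^sub>0 lam \<le> 1")
  case True
  thus ?thesis using ell by blast
next
  case False
  define S\<^sub>0 where "S\<^sub>0 = ell_norm_pow \<tau>\<^sub>0 lam"
  define \<tau> where "\<tau> = \<tau>\<^sub>0 + ln S\<^sub>0 / (- ln (lam 1))"
  have S\<^sub>0: "1 < S\<^sub>0" using False by (simp add: S\<^sub>0_def)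
  have ln_lam1: "ln (lam 1) < 0" using lam1 by simp
  have tau: "\<tau>\<^sub>0 \<le> \<tau>" using S\<^sub>0 ln_lam1 by (simp add: \<tau>_def divide_nonneg_neg)
  have "lam 1 powr (\<tau> - \<tau>\<^sub>0) = exp (- ln S\<^sub>0)"
    using lam1 ln_lam1 by (simp add: powr_def \<tau>_def)
  hence "lam 1 powr (\<tau> - \<tau>\<^sub>0) * S\<^sub>0 = 1" using S\<^sub>0 by (simp add: exp_minus)
  thus ?thesis using ell_norm_pow_larger_exponent[OF eigs tau ell] tau
    unfolding S\<^sub>0_def by (intro exI[of _ \<tau>]) auto
qed

lemma power_le_if_log_bound:
  fixes S :: real and f :: "nat \<Rightarrow> real"
  assumes S: "1 \<le> S" and f: "\<And>d. 1 \<le> f d"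
    and log: "\<forall>d\<ge>d\<^sub>0. d \<ge> 1 \<longrightarrow> ln (f d) / real d \<ge> ln S" and d: "1 \<le> d"
  shows "S ^ d \<le> S ^ d\<^sub>0 * f d"
proof (cases "d\<^sub>0 \<le> d")
  case True
  have "real d * ln S \<le> ln (f d)" using log True d by (simp add: field_simps)
  hence "ln (S ^ d) \<le> ln (f d)" using S by (simp add: ln_realpow)
  hence "S ^ d \<le> f d" using S f[of d] by simp
  also have "\<dots> \<le> S ^ d\<^sub>0 * f d" using S f[of d] by simp
  finally show ?thesis .
next
  case False
  have "S ^ d \<le> S ^ d\<^sub>0" using False S by (intro power_increasing) auto
  also have "\<dots> \<le> S ^ d\<^sub>0 * f d" using S f[of d] by simp
  finally show ?thesis .
qed

theorem proposition6:
  fixes lam :: "nat \<Rightarrow> real" and I :: "nat \<Rightarrow> nat set" and \<tau>\<^sub>0 :: real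
  assumes eigs: "admissible_eigs lam"
    and idx: "admissible_index_sets I"
    and lam2: "lam 2 > 0"
    and init: "\<forall>d\<ge>1. init_err_sq_anti lam I d > 0"
    and tau0: "\<tau>\<^sub>0 > 0"
    and ell: "in_ell \<tau>\<^sub>0 lam"
  shows "(lam 1 < 1 \<longrightarrow> strongly_poly_tractable_anti lam I)
       \<and> ((lam 1 \<ge> 1 \<and> (\<exists>\<tau> d\<^sub>0::nat. \<tau> \<ge> \<tau>\<^sub>0 \<and>
             (\<forall>d\<ge>d\<^sub>0. d \<ge> 1 \<longrightarrow> ln (fact (card (I d))) / real d \<ge> ln (ell_norm_pow \<tau> lam))))
          \<longrightarrow> strongly_poly_tractable_anti lam I)"
proof -
  have Isub: "\<forall>d\<ge>1. I d \<subseteq> {1..d}" using idx unfolding admissible_index_sets_def by auto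
  have lam1: "0 < lam 1" using lam2 admissible_eigs_bounds[OF eigs, of 1] by (simp add: numeral_2_eq_2)
  note criterion = strongly_poly_tractable_anti_if_power_bound[OF Isub]
  show ?thesis
  proof (intro conjI impI)
    assume "lam 1 < 1"
    then obtain \<tau> where tau: "\<tau>\<^sub>0 \<le> \<tau>" "in_ell \<tau> lam" "ell_norm_pow \<tau> lam \<le> 1"
      using ell_norm_pow_le_1_if_lam1_lt_1[OF eigs lam1 _ ell] by blast
    have "0 \<le> ell_norm_pow \<tau> lam"
      using first_term_le_ell_norm_pow[OF tau(2)] powr_ge_zero[of "lam 1" \<tau>] by linarith
    hence bound: "ell_norm_pow \<tau> lam ^ d \<le> 1 * fact (card (I d))" for d
      using tau(3) by (simp add: power_le_one order_trans[OF _ fact_ge_1])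
    show "strongly_poly_tractable_anti lam I"
      by (rule criterion[where C = 1]) (use tau tau0 bound in \<open>auto simp: in_ell_def\<close>)
  next
    assume "1 \<le> lam 1 \<and> (\<exists>\<tau> d\<^sub>0::nat. \<tau> \<ge> \<tau>\<^sub>0 \<and>
             (\<forall>d\<ge>d\<^sub>0. d \<ge> 1 \<longrightarrow> ln (fact (card (I d))) / real d \<ge> ln (ell_norm_pow \<tau> lam)))"
    then obtain \<tau> d\<^sub>0 where lam1_ge: "1 \<le> lam 1" and tau: "\<tau>\<^sub>0 \<le> \<tau>"
      and log: "\<forall>d\<ge>d\<^sub>0. d \<ge> 1 \<longrightarrow> ln (fact (card (I d))) / real d \<ge> ln (ell_norm_pow \<tau> lam)"
      by blast
    have ell_tau: "in_ell \<tau> lam" using ell_norm_pow_larger_exponent(1)[OF eigs tau ell] .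
    have "1 \<le> lam 1 powr \<tau>" using lam1_ge tau tau0 by (intro ge_one_powr_ge_zero) auto
    hence S: "1 \<le> ell_norm_pow \<tau> lam" using first_term_le_ell_norm_pow[OF ell_tau] by simp
    have bound: "\<forall>d\<ge>1. ell_norm_pow \<tau> lam ^ d \<le> ell_norm_pow \<tau> lam ^ d\<^sub>0 * fact (card (I d))"
      using power_le_if_log_bound[OF S _ log] by simp
    show "strongly_poly_tractable_anti lam I"
      by (rule criterion[where C = "ell_norm_pow \<tau> lam ^ d\<^sub>0"])
        (use S tau tau0 ell_tau bound in \<open>auto simp: in_ell_def\<close>)
  qed
qed

end
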